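(* Let $d\ge 2$. There are constants $C_1,C_2>0$ depending only on $d$ such that for all $n\ge d+2$, all $\mathcal{F}$, $B_i$, $\mathcal{X}_v,\mathcal{Y}_v$ as in the context, and every $v\in[n]$, $$|\mathcal{Y}_v|\le C_1\left(\binom{n-1}{d-1}-|\mathcal{X}_v|\right)^{\frac{d}{d-1}}+C_2\,n^{\frac{d(d-2)}{d-1}}.$$
   Context: Let $\mathcal{F}=\{F_1,\dots,F_m\}\subseteq\binom{[n]}{d+1}$ consist of distinct sets and have VC-dimension at most $d$ (no $(d+1)$-set $S$ is shattered, i.e. no $S$ such that every $A\subseteq S$ equals $F\cap S$ for some $F\in\mathcal{F}$). For $i\in[m]$, call $B\subsetneq F_i$ admissible for $F_i$ if $F\cap F_i\neq B$ for every $F\in\mathcal{F}$ (admissible sets exist by the VC-dimension assumption). For each $i$, $B_i$ is a fixed admissible set for $F_i$ of maximum cardinality among all admissible sets for $F_i$. For $v\in[n]$, $\mathcal{X}_v:=\{F_k\setminus\{v\}: k\in[m],\ v\in B_k\}$ and $\mathcal{Y}_v:=\{F_k\setminus\{v\}: k\in[m],\ v\in F_k\setminus B_k\}$. *)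

theory Defs
  imports "HOL-Analysis.Analysis"
begin

definition shatters :: "nat set set \<Rightarrow> nat set \<Rightarrow> bool" where
  "shatters \<F> S \<longleftrightarrow> (\<forall>A. A \<subseteq> S \<longrightarrow> (\<exists>F\<in>\<F>. F \<inter> S = A))"

definition vc_dim_le :: "nat set set \<Rightarrow> nat \<Rightarrow> bool" where
  "vc_dim_le \<F> d \<longleftrightarrow> (\<forall>S. finite S \<and> card S = d + 1 \<longrightarrow> \<not> shatters \<F> S)"

definition admissible :: "nat set set \<Rightarrow> nat set \<Rightarrow> nat set \<Rightarrow> bool" where
  "admissible \<F> Fi B \<longleftrightarrow> B \<subset> Fi \<and> (\<forall>F\<in>\<F>. F \<inter> Fi \<noteq> B)"

definition max_admissible :: "nat set set \<Rightarrow> nat set \<Rightarrow> nat set \<Rightarrow> bool" where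
  "max_admissible \<F> Fi B \<longleftrightarrow> admissible \<F> Fi B \<and>
     (\<forall>B'. admissible \<F> Fi B' \<longrightarrow> card B' \<le> card B)"

definition Xfam :: "nat set set \<Rightarrow> (nat set \<Rightarrow> nat set) \<Rightarrow> nat \<Rightarrow> nat set set" where
  "Xfam \<F> B v = {F - {v} | F. F \<in> \<F> \<and> v \<in> B F}"

definition Yfam :: "nat set set \<Rightarrow> (nat set \<Rightarrow> nat set) \<Rightarrow> nat \<Rightarrow> nat set set" where
  "Yfam \<F> B v = {F - {v} | F. F \<in> \<F> \<and> v \<in> F - B F}"

end

theory Submission
  imports Defs
begin

text \<open>The family \<open>Y\<close> is \<open>d\<close>-uniform, so a Kruskal--Katona type estimate bounds \<open>|Y|\<close> by a
  constant times \<open>|\<partial>Y|\<^bsup>d/(d-1)\<^esup>\<close>, where \<open>\<partial>Y\<close> is its \<open>(d-1)\<close>-shadow.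
  If \<open>T \<in> X\<close> and \<open>|B(T + v)| = d\<close>, then \<open>B(T + v) - v\<close> determines \<open>T\<close> and avoids \<open>\<partial>Y\<close>: a \<open>d\<close>-set
  \<open>B F\<close> contained in another member \<open>G\<close> would equal the trace \<open>G \<inter> F\<close>. Hence \<open>|\<partial>Y|\<close> is at most
  \<open>C(n-1, d-1) - |X|\<close> plus the number of the remaining members of \<open>X\<close>.
  Those are grouped by their core \<open>C = B(T + v) - v\<close>, of size at most \<open>d - 2\<close>; within a group the
  sets \<open>T - C\<close> meet every member of the link of \<open>v\<close> above \<open>C\<close> and, by the maximality of \<open>B\<close>,
  cut out every nonempty proper subset of themselves as a trace, which bounds the size of the group by
  a constant depending only on \<open>d\<close>.\<close>

section \<open>Shadows of uniform families\<close>

definition shadow :: "'a set set \<Rightarrow> nat \<Rightarrow> 'a set set" where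
  "shadow Y k = {T. \<exists>S\<in>Y. T \<subseteq> S \<and> card T = k}"

definition extension_points :: "'a set set \<Rightarrow> 'a set \<Rightarrow> 'a set" where
  "extension_points Y T = {x. x \<notin> T \<and> insert x T \<in> Y}"

lemma finite_shadow:
  assumes "finite Y" and "\<And>S. S \<in> Y \<Longrightarrow> finite S"
  shows "finite (shadow Y k)"
proof -
  have "shadow Y k \<subseteq> (\<Union>S\<in>Y. Pow S)"
    unfolding shadow_def by auto
  then show ?thesis
    using assms by (auto intro: finite_subset)
qed

lemma finite_extension_points:
  assumes "finite Y" and "\<And>S. S \<in> Y \<Longrightarrow> finite S"
  shows "finite (extension_points Y T)"
proof -
  have "extension_points Y T \<subseteq> \<Union>Y"
    unfolding extension_points_def by auto
  then show ?thesis
    using assms by (auto intro: finite_subset)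
qed

lemma power_le_fact_mult_card_if_incidences:
  assumes "finite E" and "finite Z" and "t \<le> card E"
    and "\<And>x. x \<in> E \<Longrightarrow> t ^ j \<le> fact j * card {S \<in> Z. x \<in> S}"
    and "\<And>S. S \<in> Z \<Longrightarrow> card {x \<in> E. x \<in> S} \<le> Suc j"
  shows "t ^ Suc j \<le> fact (Suc j) * card Z"
proof -
  have "t * t ^ j \<le> (\<Sum>x\<in>E. t ^ j)"
    using assms(3) by simp
  also have "\<dots> \<le> (\<Sum>x\<in>E. fact j * card {S \<in> Z. x \<in> S})"
    using assms(4) by (rule sum_mono)
  also have "\<dots> = fact j * (\<Sum>x\<in>E. \<Sum>S\<in>Z. if x \<in> S then 1 else 0)"
    using assms(2) by (simp add: sum_distrib_left sum.inter_filter[symmetric])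
  also have "(\<Sum>x\<in>E. \<Sum>S\<in>Z. if x \<in> S then 1 else 0) = (\<Sum>S\<in>Z. card {x \<in> E. x \<in> S})"
    using assms(1) by (subst sum.swap) (simp add: sum.inter_filter[symmetric])
  also have "\<dots> \<le> (\<Sum>S\<in>Z. Suc j)"
    using assms(5) by (rule sum_mono)
  finally show ?thesis
    by (simp add: algebra_simps)
qed

lemma card_extension_points_inter_le:
  assumes "A \<subseteq> T" and "A \<subseteq> S" and "finite S"
  shows "card {x \<in> extension_points Y T. x \<in> S} \<le> card S - card A"
proof -
  have "{x \<in> extension_points Y T. x \<in> S} \<subseteq> S - A"
    unfolding extension_points_def using assms(1) by auto
  then have "card {x \<in> extension_points Y T. x \<in> S} \<le> card (S - A)"
    using assms(3) by (intro card_mono) auto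
  also have "\<dots> = card S - card A"
    using assms(2,3) by (simp add: card_Diff_subset finite_subset)
  finally show ?thesis .
qed

text \<open>Each \<open>k\<close>-set \<open>T\<close> of the shadow between \<open>A\<close> and \<open>S\<^sub>0\<close> has at least \<open>t\<close> extension points \<open>x\<close>, each
  giving a larger set \<open>insert x A\<close> to which induction applies; a shadow set above \<open>A\<close> contains at
  most \<open>j + 1\<close> of these points.\<close>
lemma power_le_fact_mult_card_shadow_supersets:
  assumes fin: "finite Y" and card_Y: "\<And>S. S \<in> Y \<Longrightarrow> card S = Suc k"
    and deg: "\<And>T. T \<in> shadow Y k \<Longrightarrow> t \<le> card (extension_points Y T)"
    and "j \<le> k" and "A \<subseteq> S0" and "S0 \<in> Y" and "card A = k - j"
  shows "t ^ j \<le> fact j * card {T \<in> shadow Y k. A \<subseteq> T}"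
proof -
  have fin_members: "finite S" if "S \<in> Y" for S
    using card_Y[OF that] by (intro card_ge_0_finite) simp
  have fin_shadow: "finite (shadow Y k)"
    using finite_shadow fin fin_members by blast
  show ?thesis
    using assms(4-)
  proof (induction j arbitrary: A S0)
    case 0
    then have "A \<in> {T \<in> shadow Y k. A \<subseteq> T}"
      unfolding shadow_def by auto
    then have "card {T \<in> shadow Y k. A \<subseteq> T} > 0"
      using fin_shadow card_gt_0_iff by fastforce
    then show ?case
      by simp
  next
    case (Suc j)
    have fin_A: "finite A"
      using Suc.prems fin_members finite_subset by blast
    obtain T where "A \<subseteq> T" "T \<subseteq> S0" "card T = k"
      using exists_subset_between[of A k S0] Suc.prems card_Y fin_members by auto
    then have T: "T \<in> shadow Y k"
      unfolding shadow_def using Suc.prems by auto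
    define E where "E = extension_points Y T"
    define Z where "Z = {T' \<in> shadow Y k. A \<subseteq> T'}"
    have "finite E"
      unfolding E_def using finite_extension_points fin fin_members by blast
    moreover have "finite Z"
      unfolding Z_def using fin_shadow by simp
    moreover have "t \<le> card E"
      using deg[OF T] unfolding E_def .
    moreover have "t ^ j \<le> fact j * card {S \<in> Z. x \<in> S}" if "x \<in> E" for x
    proof -
      have x: "x \<notin> T" "insert x T \<in> Y"
        using that unfolding E_def extension_points_def by auto
      then have "x \<notin> A"
        using \<open>A \<subseteq> T\<close> by auto
      then have "card (insert x A) = k - j"
        using fin_A Suc.prems by (simp add: Suc_diff_Suc)
      moreover have "{S \<in> shadow Y k. insert x A \<subseteq> S} = {S \<in> Z. x \<in> S}"
        unfolding Z_def by auto
      ultimately show ?thesis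
        using Suc.IH[of "insert x A" "insert x T"] Suc.prems x \<open>A \<subseteq> T\<close> by auto
    qed
    moreover have "card {x \<in> E. x \<in> S} \<le> Suc j" if "S \<in> Z" for S
    proof -
      have S: "A \<subseteq> S" "card S = k"
        using that unfolding Z_def shadow_def by auto
      then have "finite S"
        using Suc.prems by (intro card_ge_0_finite) simp
      then show ?thesis
        unfolding E_def using card_extension_points_inter_le[OF \<open>A \<subseteq> T\<close> S(1)] S Suc.prems
        by simp
    qed
    ultimately show ?case
      unfolding Z_def by (rule power_le_fact_mult_card_if_incidences)
  qed
qed

lemma power_le_fact_mult_card_shadow:
  assumes "finite Y" and "\<And>S. S \<in> Y \<Longrightarrow> card S = Suc k"
    and "\<And>T. T \<in> shadow Y k \<Longrightarrow> t \<le> card (extension_points Y T)" and "Y \<noteq> {}"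
  shows "t ^ k \<le> fact k * card (shadow Y k)"
proof -
  obtain S0 where "S0 \<in> Y"
    using assms(4) by auto
  then show ?thesis
    using power_le_fact_mult_card_shadow_supersets[OF assms(1-3), of k "{}" S0] by simp
qed

lemma card_supersets_le_card_extension_points:
  assumes "finite Y" and "\<And>S. S \<in> Y \<Longrightarrow> card S = Suc k" and "card T = k"
  shows "card {S \<in> Y. T \<subseteq> S} \<le> card (extension_points Y T)"
proof -
  have "{S \<in> Y. T \<subseteq> S} \<subseteq> (\<lambda>x. insert x T) ` extension_points Y T"
  proof
    fix S
    assume S: "S \<in> {S \<in> Y. T \<subseteq> S}"
    then have "finite S"
      using assms(2) by (metis card.infinite nat.distinct(1) mem_Collect_eq)
    then have "card (S - T) = 1"
      using S assms(2,3) card_Diff_subset[of T S] finite_subset[of T S] by auto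
    then obtain x where "S - T = {x}"
      by (meson card_1_singletonE)
    then have "x \<notin> T" and "S = insert x T"
      using S by auto
    then show "S \<in> (\<lambda>x. insert x T) ` extension_points Y T"
      using S unfolding extension_points_def by (intro image_eqI[of S _ x]) auto
  qed
  moreover have "finite (extension_points Y T)"
    using finite_extension_points[OF assms(1)] assms(2) by (metis card.infinite nat.distinct(1))
  ultimately have "card {S \<in> Y. T \<subseteq> S} \<le> card ((\<lambda>x. insert x T) ` extension_points Y T)"
    by (intro card_mono) auto
  also have "\<dots> \<le> card (extension_points Y T)"
    by (rule card_image_le) fact
  finally show ?thesis .
qed

lemma card_shadow_Diff_supersets_less:
  assumes "finite (shadow Y k)" and "T \<in> shadow Y k"
  shows "card (shadow (Y - {S \<in> Y. T \<subseteq> S}) k) < card (shadow Y k)"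
proof -
  have "shadow (Y - {S \<in> Y. T \<subseteq> S}) k \<subseteq> shadow Y k - {T}"
    unfolding shadow_def by auto
  then have "card (shadow (Y - {S \<in> Y. T \<subseteq> S}) k) \<le> card (shadow Y k) - 1"
    using assms card_mono[of "shadow Y k - {T}"] by simp
  moreover have "card (shadow Y k) \<ge> 1"
    using assms card_gt_0_iff[of "shadow Y k"] by auto
  ultimately show ?thesis
    by linarith
qed

text \<open>Some shadow set \<open>T\<close> has fewer than \<open>t\<close> extension points; deleting the fewer than \<open>t\<close>
  members above \<open>T\<close> removes \<open>T\<close> from the shadow.\<close>
lemma card_le_mult_card_shadow:
  assumes "finite Y" and "\<And>S. S \<in> Y \<Longrightarrow> card S = Suc k"
    and "fact k * card (shadow Y k) < t ^ k"
  shows "card Y \<le> t * card (shadow Y k)"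
  using assms
proof (induction "card Y" arbitrary: Y rule: less_induct)
  case less
  note fin = less.prems(1) and card_Y = less.prems(2)
  show ?case
  proof (cases "Y = {}")
    case False
    have "\<not> t ^ k \<le> fact k * card (shadow Y k)"
      using less.prems(3) by simp
    then obtain T where T: "T \<in> shadow Y k" "card (extension_points Y T) < t"
      using power_le_fact_mult_card_shadow[OF fin card_Y _ False] by (meson not_le)
    define R where "R = {S \<in> Y. T \<subseteq> S}"
    have fin_shadow: "finite (shadow Y k)"
      using finite_shadow[OF fin] card_Y by (metis card.infinite nat.distinct(1))
    have "card T = k"
      using T unfolding shadow_def by auto
    then have card_R: "card R < t"
      using card_supersets_le_card_extension_points[OF fin card_Y] T(2) unfolding R_def
      by fastforce
    have "R \<noteq> {}" and "R \<subseteq> Y" and "finite R"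
      using T fin unfolding shadow_def R_def by auto
    then have card_Y_split: "card Y = card (Y - R) + card R" and "card (Y - R) < card Y"
      using card_Diff_subset[of R Y] card_mono[OF fin, of R] card_gt_0_iff[of R] by auto
    have shadow_smaller: "card (shadow (Y - R) k) < card (shadow Y k)"
      unfolding R_def using fin_shadow T(1) by (rule card_shadow_Diff_supersets_less)
    then have "fact k * card (shadow (Y - R) k) < t ^ k"
      using less.prems(3) by (meson le_less_trans less_imp_le_nat mult_le_mono2)
    then have "card (Y - R) \<le> t * card (shadow (Y - R) k)"
      using less.hyps \<open>card (Y - R) < card Y\<close> fin card_Y by auto
    also have "\<dots> \<le> t * (card (shadow Y k) - 1)"
      using shadow_smaller by (intro mult_le_mono2) linarith
    also have "t * (card (shadow Y k) - 1) + t = t * card (shadow Y k)"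
      using shadow_smaller by (cases "card (shadow Y k)") auto
    finally show ?thesis
      using card_Y_split card_R by linarith
  qed simp
qed

lemma exists_nat_power_gt:
  fixes c s :: real
  assumes "k \<ge> 1" and "c \<ge> 1" and "s \<ge> 1"
  obtains t :: nat where "c * s < real t ^ k" and "real t \<le> (c + 2) * s powr (1 / real k)"
proof
  define r where "r = (c * s) powr (1 / real k)"
  define t where "t = nat \<lceil>r\<rceil> + 1"
  have "r \<ge> 0"
    unfolding r_def by simp
  then have "real t > r" and "real t \<le> r + 2"
    unfolding t_def by linarith+
  have "c * s = r ^ k"
    unfolding r_def using assms by (subst powr_power) auto
  also have "\<dots> < real t ^ k"
    using \<open>r \<ge> 0\<close> \<open>real t > r\<close> assms(1) by (intro power_strict_mono) auto
  finally show "c * s < real t ^ k" .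
  have "c powr (1 / real k) \<le> c"
    using assms powr_mono[of "1 / real k" 1 c] by simp
  then have "r \<le> c * s powr (1 / real k)"
    unfolding r_def using assms by (simp add: powr_mult mult_right_mono)
  moreover have "s powr (1 / real k) \<ge> 1"
    using assms(3) by (simp add: ge_one_powr_ge_zero)
  ultimately show "real t \<le> (c + 2) * s powr (1 / real k)"
    using \<open>real t \<le> r + 2\<close> by (simp add: algebra_simps)
qed

lemma card_le_card_shadow_powr:
  assumes "k \<ge> 1" and fin: "finite Y" and card_Y: "\<And>S. S \<in> Y \<Longrightarrow> card S = Suc k"
  shows "real (card Y) \<le> (fact k + 2) * real (card (shadow Y k)) powr (real (Suc k) / real k)"
proof (cases "card (shadow Y k) = 0")
  case True
  then show ?thesis
    using card_le_mult_card_shadow[OF fin card_Y, of 1] by simp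
next
  case False
  define s where "s = card (shadow Y k)"
  then have "real s \<ge> 1"
    using False by simp
  moreover have "fact k \<ge> (1 :: real)"
    by (rule fact_ge_1)
  ultimately obtain t :: nat where "fact k * real s < real t ^ k"
    and t_le: "real t \<le> (fact k + 2) * real s powr (1 / real k)"
    using exists_nat_power_gt[OF assms(1)] by blast
  then have "fact k * card (shadow Y k) < t ^ k"
    unfolding s_def by (metis of_nat_fact of_nat_less_iff of_nat_mult of_nat_power)
  then have "real (card Y) \<le> real t * real s"
    using card_le_mult_card_shadow[OF fin card_Y] s_def by (simp flip: of_nat_mult)
  also have "\<dots> \<le> (fact k + 2) * (real s powr (1 / real k) * real s)"
    using mult_right_mono[OF t_le, of "real s"] by (simp add: mult.assoc)
  also have "real s powr (1 / real k) * real s = real s powr (1 / real k + 1)"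
    using \<open>real s \<ge> 1\<close> by (simp add: powr_add)
  also have "1 / real k + 1 = real (Suc k) / real k"
    using assms(1) by (simp add: field_simps)
  finally show ?thesis
    unfolding s_def .
qed

section \<open>Families in which every nonempty proper subset is a trace\<close>

lemma card_le_card_if_disjoint_family_meets:
  assumes "finite S" and "disjoint_family_on A M" and "\<And>T. T \<in> M \<Longrightarrow> A T \<inter> S \<noteq> {}"
  shows "card M \<le> card S"
proof -
  define g where "g T = (SOME x. x \<in> A T \<inter> S)" for T
  have g: "g T \<in> A T \<inter> S" if "T \<in> M" for T
  proof -
    have "\<exists>x. x \<in> A T \<inter> S"
      using assms(3)[OF that] by auto
    then show ?thesis
      unfolding g_def by (rule someI_ex)
  qed
  have "inj_on g M"
  proof (rule inj_onI)
    fix T T'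
    assume "T \<in> M" "T' \<in> M" "g T = g T'"
    then have "g T \<in> A T \<inter> A T'"
      using g[OF \<open>T \<in> M\<close>] g[OF \<open>T' \<in> M\<close>] by (metis IntD1 IntI)
    then show "T = T'"
      using disjoint_family_onD[OF assms(2) \<open>T \<in> M\<close> \<open>T' \<in> M\<close>] by auto
  qed
  then show ?thesis
    using g assms(1) by (intro card_inj_on_le) auto
qed

lemma exists_maximal_disjoint_subfamily:
  assumes "finite F"
  obtains M where "M \<subseteq> F" and "disjoint_family_on A M"
    and "\<And>T. T \<in> F \<Longrightarrow> A T \<noteq> {} \<Longrightarrow> A T \<inter> (\<Union>T'\<in>M. A T') \<noteq> {}"
proof -
  define Ms where "Ms = {M. M \<subseteq> F \<and> disjoint_family_on A M}"
  have "finite Ms" and "{} \<in> Ms"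
    unfolding Ms_def using assms by (auto simp: disjoint_family_on_def)
  then have "Max (card ` Ms) \<in> card ` Ms"
    by (intro Max_in) auto
  then obtain M where "M \<in> Ms" and M_max: "card M = Max (card ` Ms)"
    by auto
  then have M: "M \<subseteq> F" "disjoint_family_on A M"
    unfolding Ms_def by auto
  show ?thesis
  proof (rule that[OF M])
    fix T
    assume "T \<in> F" and "A T \<noteq> {}"
    show "A T \<inter> (\<Union>T'\<in>M. A T') \<noteq> {}"
    proof (cases "T \<in> M")
      case False
      have "finite M"
        using M(1) assms finite_subset by blast
      have "insert T M \<notin> Ms"
      proof
        assume "insert T M \<in> Ms"
        then have "card (insert T M) \<le> card M"
          unfolding M_max using \<open>finite Ms\<close> by (intro Max_ge) auto
        then show False
          using \<open>finite M\<close> False by simp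
      qed
      then show ?thesis
        using M \<open>T \<in> F\<close> False unfolding Ms_def by (simp add: disjoint_family_on_insert)
    qed (use \<open>A T \<noteq> {}\<close> in auto)
  qed
qed

locale trace_complete_family =
  fixes L TT :: "'a set set" and r :: nat
  assumes finite_L: "finite L"
    and card_L: "\<And>S. S \<in> L \<Longrightarrow> card S = r"
    and r_pos: "r \<ge> 1"
    and TT_subset: "TT \<subseteq> L"
    and meets: "\<And>T S. T \<in> TT \<Longrightarrow> S \<in> L \<Longrightarrow> S \<inter> T \<noteq> {}"
    and traces: "\<And>T W. T \<in> TT \<Longrightarrow> W \<noteq> {} \<Longrightarrow> W \<subset> T \<Longrightarrow> \<exists>S\<in>L. S \<inter> T = W"
begin

lemma finite_member: "S \<in> L \<Longrightarrow> finite S"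
  using card_L r_pos by (intro card_ge_0_finite) simp

lemma finite_TT: "finite TT"
  using TT_subset finite_L finite_subset by blast

lemma card_le_1_if_disjoint:
  assumes "M \<subseteq> TT" and disj: "disjoint_family_on (\<lambda>T. T) M"
  shows "card M \<le> 1"
proof (cases "M = {}")
  case False
  then obtain T1 where T1: "T1 \<in> M"
    by auto
  have "M \<subseteq> {T1}"
  proof
    fix T
    assume T: "T \<in> M"
    show "T \<in> {T1}"
    proof (rule ccontr)
      assume "T \<notin> {T1}"
      then have "T \<inter> T1 = {}"
        using disjoint_family_onD[OF disj T T1] by auto
      moreover have "T \<in> L"
        using T assms(1) TT_subset by blast
      ultimately show False
        using meets[of T1 T] T1 assms(1) by blast
    qed
  qed
  then show ?thesis
    using card_mono[of "{T1}" M] by simp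
qed simp

text \<open>A trace \<open>S\<close> with \<open>S \<inter> T\<^sub>1 = T\<^sub>1 - K\<close> avoids \<open>K\<close>, so it meets every other petal \<open>T - K\<close>
  outside \<open>T\<^sub>1\<close>; this leaves at most \<open>r - 1\<close> other petals.\<close>
lemma card_le_if_disjoint_outside_nonempty:
  assumes "M \<subseteq> TT" and K_psubset: "\<And>T. T \<in> M \<Longrightarrow> K \<subset> T"
    and disj: "disjoint_family_on (\<lambda>T. T - K) M" and "K \<noteq> {}" and T1: "T1 \<in> M"
  shows "card M \<le> r"
proof -
  have "T1 - K \<noteq> {}" and "T1 - K \<subset> T1"
    using K_psubset[OF T1] \<open>K \<noteq> {}\<close> by auto
  moreover have "T1 \<in> TT"
    using T1 assms(1) by auto
  ultimately obtain S where S: "S \<in> L" "S \<inter> T1 = T1 - K"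
    using traces by metis
  have meets_outside: "(T - K) \<inter> (S - T1) \<noteq> {}" if T: "T \<in> M - {T1}" for T
  proof -
    obtain x where x: "x \<in> S" "x \<in> T"
      using meets[OF _ S(1), of T] T assms(1) by blast
    have "x \<notin> K"
      using x S(2) K_psubset[OF T1] by auto
    moreover have "(T - K) \<inter> (T1 - K) = {}"
      using disjoint_family_onD[OF disj, of T T1] T T1 by auto
    ultimately show ?thesis
      using x by auto
  qed
  have "disjoint_family_on (\<lambda>T. T - K) (M - {T1})"
    using disj by (rule disjoint_family_on_mono[rotated]) auto
  moreover have "finite (S - T1)"
    using finite_member[OF S(1)] by simp
  ultimately have "card (M - {T1}) \<le> card (S - T1)"
    using card_le_card_if_disjoint_family_meets meets_outside by blast
  also have "\<dots> \<le> r - 1"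
  proof -
    have "S \<inter> T1 \<noteq> {}"
      using S \<open>T1 - K \<noteq> {}\<close> by simp
    then have "card (S \<inter> T1) \<ge> 1"
      using finite_member[OF S(1)] by (simp add: Suc_le_eq card_gt_0_iff)
    moreover have "card (S - T1) = card S - card (S \<inter> T1)"
      using finite_member[OF S(1)] by (simp add: card_Diff_subset_Int)
    ultimately show ?thesis
      using card_L[OF S(1)] by linarith
  qed
  finally have "card M - 1 \<le> r - 1"
    using T1 finite_subset[OF assms(1) finite_TT] by (simp add: card_Diff_singleton)
  moreover have "card M \<ge> 1"
    using T1 finite_subset[OF assms(1) finite_TT] by (auto simp: Suc_le_eq card_gt_0_iff)
  ultimately show ?thesis
    using r_pos by linarith
qed

lemma card_Union_disjoint_outside_le:
  assumes "M \<subseteq> TT" and "\<And>T. T \<in> M \<Longrightarrow> K \<subset> T" and "disjoint_family_on (\<lambda>T. T - K) M"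
  shows "card (\<Union>T\<in>M. T - K) \<le> r * r"
proof -
  have "card M \<le> r"
  proof (cases "K = {}")
    case True
    then show ?thesis
      using card_le_1_if_disjoint[OF assms(1)] assms(3) r_pos by simp
  next
    case False
    then show ?thesis
      using card_le_if_disjoint_outside_nonempty[OF assms] by (cases "M = {}") auto
  qed
  have "card (\<Union>T\<in>M. T - K) \<le> (\<Sum>T\<in>M. card (T - K))"
    using finite_subset[OF assms(1) finite_TT] by (rule card_UN_le)
  also have "\<dots> \<le> (\<Sum>T\<in>M. r)"
  proof (rule sum_mono)
    fix T
    assume "T \<in> M"
    then have "T \<in> L"
      using assms(1) TT_subset by blast
    then show "card (T - K) \<le> r"
      using card_L finite_member card_mono[of T "T - K"] by fastforce
  qed
  also have "\<dots> \<le> r * r"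
    using \<open>card M \<le> r\<close> by simp
  finally show ?thesis .
qed

lemma supersets_subset_singleton:
  assumes "card K = r"
  shows "{T \<in> TT. K \<subseteq> T} \<subseteq> {K}"
proof
  fix T
  assume T: "T \<in> {T \<in> TT. K \<subseteq> T}"
  then have "T \<in> L"
    using TT_subset by blast
  then have "K = T"
    using T assms card_L finite_member card_subset_eq[of T K] by simp
  then show "T \<in> {K}"
    by simp
qed

text \<open>Take a maximal family \<open>M\<close> of members above \<open>K\<close> that are disjoint outside \<open>K\<close>: every member
  above \<open>K\<close> meets \<open>U = \<Union>T\<in>M. T - K\<close> outside \<open>K\<close>, and \<open>|U| \<le> r\<^sup>2\<close>.\<close>
lemma exists_small_transversal_outside:
  assumes "card K < r" and "finite K"
  obtains U where "finite U" and "card U \<le> r * r" and "U \<inter> K = {}"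
    and "{T \<in> TT. K \<subseteq> T} \<subseteq> (\<Union>u\<in>U. {T \<in> TT. insert u K \<subseteq> T})"
proof -
  define TK where "TK = {T \<in> TT. K \<subseteq> T}"
  have K_psubset: "K \<subset> T" if "T \<in> TK" for T
    using that assms TT_subset card_L unfolding TK_def by auto
  have "finite TK"
    unfolding TK_def using finite_TT by simp
  then obtain M where M: "M \<subseteq> TK" "disjoint_family_on (\<lambda>T. T - K) M"
    and M_max: "\<And>T. T \<in> TK \<Longrightarrow> T - K \<noteq> {} \<Longrightarrow> (T - K) \<inter> (\<Union>T'\<in>M. T' - K) \<noteq> {}"
    by (rule exists_maximal_disjoint_subfamily[where A = "\<lambda>T. T - K"]) simp_all
  define U where "U = (\<Union>T\<in>M. T - K)"
  show ?thesis
  proof (rule that[of U])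
    show "finite U"
      unfolding U_def
    proof (rule finite_UN_I)
      show "finite M"
        using M(1) \<open>finite TK\<close> by (rule finite_subset)
      fix T
      assume "T \<in> M"
      then have "T \<in> L"
        using M(1) TT_subset unfolding TK_def by blast
      then show "finite (T - K)"
        using finite_member by simp
    qed
    show "card U \<le> r * r"
      unfolding U_def using M K_psubset unfolding TK_def
      by (intro card_Union_disjoint_outside_le) auto
    show "U \<inter> K = {}"
      unfolding U_def by auto
    show "{T \<in> TT. K \<subseteq> T} \<subseteq> (\<Union>u\<in>U. {T \<in> TT. insert u K \<subseteq> T})"
    proof
      fix T
      assume T: "T \<in> {T \<in> TT. K \<subseteq> T}"
      then have "T \<in> TK"
        unfolding TK_def .
      then have "(T - K) \<inter> U \<noteq> {}"
        using M_max K_psubset[OF \<open>T \<in> TK\<close>] unfolding U_def by blast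
      then show "T \<in> (\<Union>u\<in>U. {T \<in> TT. insert u K \<subseteq> T})"
        using T by auto
    qed
  qed
qed

lemma card_supersets_le:
  assumes "j \<le> r" and "finite K" and "card K = r - j"
  shows "card {T \<in> TT. K \<subseteq> T} \<le> (r * r) ^ j"
  using assms
proof (induction j arbitrary: K)
  case 0
  then show ?case
    using supersets_subset_singleton[of K] card_mono[of "{K}"] by simp
next
  case (Suc j)
  then have "card K < r"
    by simp
  obtain U where U: "finite U" "card U \<le> r * r" "U \<inter> K = {}"
    and cover: "{T \<in> TT. K \<subseteq> T} \<subseteq> (\<Union>u\<in>U. {T \<in> TT. insert u K \<subseteq> T})"
    by (rule exists_small_transversal_outside[OF \<open>card K < r\<close> Suc.prems(2)])
  have "card {T \<in> TT. K \<subseteq> T} \<le> card (\<Union>u\<in>U. {T \<in> TT. insert u K \<subseteq> T})"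
    using cover by (intro card_mono) (auto intro: rev_finite_subset[OF finite_TT])
  also have "\<dots> \<le> (\<Sum>u\<in>U. card {T \<in> TT. insert u K \<subseteq> T})"
    using U(1) by (rule card_UN_le)
  also have "\<dots> \<le> (\<Sum>u\<in>U. (r * r) ^ j)"
  proof (rule sum_mono)
    fix u
    assume "u \<in> U"
    then have "u \<notin> K"
      using U(3) by auto
    then have "card (insert u K) = r - j"
      using Suc.prems by (simp add: Suc_diff_Suc)
    moreover have "j \<le> r" and "finite (insert u K)"
      using Suc.prems by auto
    ultimately show "card {T \<in> TT. insert u K \<subseteq> T} \<le> (r * r) ^ j"
      using Suc.IH by blast
  qed
  also have "\<dots> \<le> (r * r) ^ Suc j"
    using U(2) by simp
  finally show ?case .
qed

lemma card_TT_le: "card TT \<le> (r * r) ^ r"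
  using card_supersets_le[of r "{}"] by simp

end

section \<open>Counting in the link of a vertex\<close>

lemma card_subsets_card_le:
  assumes "finite A" and "A \<noteq> {}"
  shows "card {C. C \<subseteq> A \<and> card C \<le> m} \<le> Suc m * card A ^ m"
proof -
  have "{C. C \<subseteq> A \<and> card C \<le> m} = (\<Union>j\<in>{..m}. {C. C \<subseteq> A \<and> card C = j})"
    by auto
  then have "card {C. C \<subseteq> A \<and> card C \<le> m} \<le> (\<Sum>j\<in>{..m}. card {C. C \<subseteq> A \<and> card C = j})"
    by (simp add: card_UN_le)
  also have "\<dots> \<le> (\<Sum>j\<in>{..m}. card A ^ m)"
  proof (rule sum_mono)
    fix j
    assume "j \<in> {..m}"
    have "card {C. C \<subseteq> A \<and> card C = j} = card A choose j"
      using n_subsets[OF assms(1)] by simp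
    also have "\<dots> \<le> card A ^ j"
      by (cases "j \<le> card A") (simp_all add: binomial_le_pow binomial_eq_0)
    also have "\<dots> \<le> card A ^ m"
      using \<open>j \<in> {..m}\<close> assms by (intro power_increasing) (auto simp: Suc_le_eq card_gt_0_iff)
    finally show "card {C. C \<subseteq> A \<and> card C = j} \<le> card A ^ m" .
  qed
  also have "\<dots> = Suc m * card A ^ m"
    by simp
  finally show ?thesis .
qed

lemma powr_le_split:
  fixes s a b p :: real
  assumes "0 \<le> s" and "s \<le> a + b" and "0 \<le> b" and "0 \<le> p"
  shows "s powr p \<le> 2 powr p * a powr p + 2 powr p * b powr p"
proof (cases "a \<le> b")
  case True
  then have "s powr p \<le> (2 * b) powr p"
    using assms by (intro powr_mono2) auto
  also have "\<dots> = 2 powr p * b powr p"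
    using assms(3) by (simp add: powr_mult)
  finally show ?thesis
    using powr_ge_zero[of a p] by (simp add: add_increasing)
next
  case False
  then have "s powr p \<le> (2 * a) powr p"
    using assms by (intro powr_mono2) auto
  also have "\<dots> = 2 powr p * a powr p"
    using False assms(3) by (simp add: powr_mult)
  finally show ?thesis
    using powr_ge_zero[of b p] by (simp add: add_increasing2)
qed

definition deficit_coeff :: "nat \<Rightarrow> real" where
  "deficit_coeff d = (fact (d - 1) + 2) * 2 powr (real d / (real d - 1))"

definition error_coeff :: "nat \<Rightarrow> real" where
  "error_coeff d = deficit_coeff d * real ((d - 1) * (d * d) ^ d) powr (real d / (real d - 1))"

lemma deficit_coeff_pos: "deficit_coeff d > 0"
  unfolding deficit_coeff_def by (simp add: add_pos_pos)

lemma error_coeff_pos: "d \<ge> 2 \<Longrightarrow> error_coeff d > 0"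
  unfolding error_coeff_def using deficit_coeff_pos by simp

locale admissible_setting =
  fixes d n :: nat and FF :: "nat set set" and B :: "nat set \<Rightarrow> nat set" and v :: nat
  assumes d_ge_2: "d \<ge> 2"
    and FF_subset: "FF \<subseteq> {F. F \<subseteq> {1..n} \<and> card F = d + 1}"
    and max_admissible_B: "\<And>F. F \<in> FF \<Longrightarrow> max_admissible FF F (B F)"
    and v_in: "v \<in> {1..n}"
begin

abbreviation X :: "nat set set" where
  "X \<equiv> Xfam FF B v"

abbreviation Y :: "nat set set" where
  "Y \<equiv> Yfam FF B v"

definition link :: "nat set set" where
  "link = {F - {v} | F. F \<in> FF \<and> v \<in> F}"

definition core :: "nat set \<Rightarrow> nat set" where
  "core T = B (insert v T) - {v}"

definition X_full :: "nat set set" where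
  "X_full = {T \<in> X. card (B (insert v T)) = d}"

definition X_small :: "nat set set" where
  "X_small = X - X_full"

lemma FF_member:
  assumes "F \<in> FF"
  shows "F \<subseteq> {1..n}" and "card F = d + 1" and "finite F"
  using assms FF_subset by (auto intro: finite_subset)

lemma finite_FF: "finite FF"
proof -
  have "FF \<subseteq> Pow {1..n}"
    using FF_subset by auto
  then show ?thesis
    by (rule finite_subset) simp
qed

lemma B_psubset: "F \<in> FF \<Longrightarrow> B F \<subset> F"
  using max_admissible_B by (simp add: max_admissible_def admissible_def)

lemma trace_ne_B: "F \<in> FF \<Longrightarrow> G \<in> FF \<Longrightarrow> G \<inter> F \<noteq> B F"
  using max_admissible_B by (simp add: max_admissible_def admissible_def)

lemma trace_if_card_B_less:
  assumes "F \<in> FF" and "B' \<subset> F" and "card (B F) < card B'"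
  shows "\<exists>G\<in>FF. G \<inter> F = B'"
  using max_admissible_B[OF assms(1)] assms(2,3) unfolding max_admissible_def admissible_def
  by (meson not_le)

lemma B_not_subset_if_card_eq:
  assumes F: "F \<in> FF" and G: "G \<in> FF" "G \<noteq> F" and "card (B F) = d"
  shows "\<not> B F \<subseteq> G"
proof
  assume "B F \<subseteq> G"
  then have sub: "B F \<subseteq> G \<inter> F"
    using B_psubset[OF F] by auto
  have "G \<inter> F \<noteq> F"
    using G FF_member[OF F] FF_member[OF G(1)] card_subset_eq[of G F] by auto
  then have "card (G \<inter> F) < card F"
    using FF_member(3)[OF F] by (intro psubset_card_mono) auto
  then have "card (G \<inter> F) \<le> card (B F)"
    using FF_member(2)[OF F] \<open>card (B F) = d\<close> by simp
  then have "B F = G \<inter> F"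
    using sub FF_member(3)[OF F] by (intro card_subset_eq) (auto intro: card_mono antisym)
  then show False
    using trace_ne_B[OF F G(1)] by simp
qed

lemma X_memberD:
  assumes "T \<in> X"
  shows "insert v T \<in> FF" and "v \<notin> T" and "v \<in> B (insert v T)"
proof -
  obtain F where F: "T = F - {v}" "F \<in> FF" "v \<in> B F"
    using assms unfolding Xfam_def by auto
  then have "insert v T = F"
    using B_psubset[OF F(2)] by auto
  then show "insert v T \<in> FF" and "v \<notin> T" and "v \<in> B (insert v T)"
    using F by auto
qed

lemma Y_memberD:
  assumes "T \<in> Y"
  shows "insert v T \<in> FF" and "v \<notin> B (insert v T)"
proof -
  obtain F where F: "T = F - {v}" "F \<in> FF" "v \<in> F - B F"
    using assms unfolding Yfam_def by auto
  then have "insert v T = F"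
    by auto
  then show "insert v T \<in> FF" and "v \<notin> B (insert v T)"
    using F by auto
qed

lemma link_memberD:
  assumes "S \<in> link"
  shows "insert v S \<in> FF" and "card S = d" and "S \<subseteq> {1..n} - {v}"
proof -
  obtain F where F: "S = F - {v}" "F \<in> FF" "v \<in> F"
    using assms unfolding link_def by auto
  then have "insert v S = F"
    by auto
  then show "insert v S \<in> FF" and "card S = d" and "S \<subseteq> {1..n} - {v}"
    using F FF_member[OF F(2)] by auto
qed

lemma X_subset_link: "X \<subseteq> link"
  unfolding Xfam_def link_def using B_psubset by blast

lemma Y_subset_link: "Y \<subseteq> link"
  unfolding Yfam_def link_def by blast

lemma finite_link: "finite link"
proof -
  have "link = (\<lambda>F. F - {v}) ` {F \<in> FF. v \<in> F}"
    unfolding link_def by auto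
  then show ?thesis
    using finite_FF by simp
qed

lemma core_X_full:
  assumes "T \<in> X_full"
  shows "core T \<subseteq> {1..n} - {v}" and "card (core T) = d - 1" and "insert v (core T) = B (insert v T)"
proof -
  have T: "T \<in> X" "card (B (insert v T)) = d"
    using assms unfolding X_full_def by auto
  have "B (insert v T) \<subseteq> {1..n}"
    using B_psubset FF_member(1) X_memberD(1)[OF T(1)] by blast
  moreover have "finite (B (insert v T))"
    using T(2) d_ge_2 by (intro card_ge_0_finite) simp
  ultimately show "core T \<subseteq> {1..n} - {v}" and "card (core T) = d - 1"
      and "insert v (core T) = B (insert v T)"
    unfolding core_def using T X_memberD(3)[OF T(1)] by auto
qed

lemma inj_on_core_X_full: "inj_on core X_full"
proof (rule inj_onI)
  fix T1 T2
  assume T: "T1 \<in> X_full" "T2 \<in> X_full" "core T1 = core T2"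
  then have "B (insert v T1) = B (insert v T2)"
    using core_X_full(3) by metis
  moreover have "T1 \<in> X" "T2 \<in> X" "card (B (insert v T1)) = d"
    using T unfolding X_full_def by auto
  ultimately have "insert v T1 = insert v T2"
    using B_not_subset_if_card_eq[of "insert v T1" "insert v T2"] B_psubset X_memberD(1) by blast
  then show "T1 = T2"
    using X_memberD(2) \<open>T1 \<in> X\<close> \<open>T2 \<in> X\<close> by (metis Diff_insert_absorb)
qed

lemma core_X_full_notin_shadow:
  assumes "T \<in> X_full"
  shows "core T \<notin> shadow Y (d - 1)"
proof
  assume "core T \<in> shadow Y (d - 1)"
  then obtain S where S: "S \<in> Y" "core T \<subseteq> S"
    unfolding shadow_def by auto
  have T: "T \<in> X" "card (B (insert v T)) = d"
    using assms unfolding X_full_def by auto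
  have "B (insert v T) \<subseteq> insert v S"
    using core_X_full(3)[OF assms] S(2) by auto
  moreover have "insert v S \<noteq> insert v T"
    using Y_memberD(2)[OF S(1)] X_memberD(3)[OF T(1)] by auto
  ultimately show False
    using B_not_subset_if_card_eq[OF X_memberD(1)[OF T(1)] Y_memberD(1)[OF S(1)] _ T(2)] by simp
qed

lemma card_X_full_add_card_shadow_le: "card X_full + card (shadow Y (d - 1)) \<le> (n - 1) choose (d - 1)"
proof -
  define P where "P = {R. R \<subseteq> {1..n} - {v} \<and> card R = d - 1}"
  have "finite X_full"
    using X_subset_link finite_link unfolding X_full_def by (auto intro: finite_subset)
  moreover have "finite (shadow Y (d - 1))"
  proof (rule finite_shadow)
    show "finite Y"
      using Y_subset_link finite_link by (rule finite_subset)
    show "finite S" if "S \<in> Y" for S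
      using that Y_subset_link link_memberD(2) d_ge_2 by (intro card_ge_0_finite) auto
  qed
  moreover have "core ` X_full \<inter> shadow Y (d - 1) = {}"
    using core_X_full_notin_shadow by auto
  ultimately have "card X_full + card (shadow Y (d - 1)) = card (core ` X_full \<union> shadow Y (d - 1))"
    using card_image[OF inj_on_core_X_full] by (simp add: card_Un_disjoint)
  also have "\<dots> \<le> card P"
  proof (rule card_mono)
    show "finite P"
      unfolding P_def by simp
    show "core ` X_full \<union> shadow Y (d - 1) \<subseteq> P"
      unfolding P_def shadow_def using core_X_full(1,2) Y_subset_link link_memberD(3) by blast
  qed
  also have "card P = (n - 1) choose (d - 1)"
    unfolding P_def using n_subsets[of "{1..n} - {v}" "d - 1"] v_in by simp
  finally show ?thesis .
qed

lemma X_small_memberD: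
  assumes "T \<in> X_small"
  shows "insert v T \<in> FF" and "v \<notin> T" and "B (insert v T) = insert v (core T)"
    and "core T \<subseteq> T" and "card (core T) \<le> d - 2" and "T \<in> link"
proof -
  have T: "T \<in> X" "card (B (insert v T)) \<noteq> d"
    using assms unfolding X_small_def X_full_def by auto
  show "insert v T \<in> FF" and "v \<notin> T"
    using X_memberD[OF T(1)] by auto
  show "B (insert v T) = insert v (core T)"
    unfolding core_def using X_memberD(3)[OF T(1)] by auto
  have psub: "B (insert v T) \<subset> insert v T"
    using B_psubset X_memberD(1)[OF T(1)] by blast
  then show "core T \<subseteq> T"
    unfolding core_def by auto
  have fin: "finite (insert v T)" "card (insert v T) = d + 1"
    using FF_member(2,3)[OF X_memberD(1)[OF T(1)]] by auto
  then have "card (B (insert v T)) < d + 1"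
    using psubset_card_mono[OF fin(1) psub] by simp
  then have "card (B (insert v T)) \<le> d - 1"
    using T(2) by linarith
  moreover have "finite (B (insert v T))"
    using psub fin(1) finite_subset by blast
  ultimately show "card (core T) \<le> d - 2"
    unfolding core_def using X_memberD(3)[OF T(1)] by (simp add: card_Diff_singleton)
  show "T \<in> link"
    using X_subset_link T(1) by auto
qed

definition link_above :: "nat set \<Rightarrow> nat set set" where
  "link_above C = {S - C | S. S \<in> link \<and> C \<subseteq> S}"

definition core_fibre :: "nat set \<Rightarrow> nat set set" where
  "core_fibre C = {T - C | T. T \<in> X_small \<and> core T = C}"

text \<open>The set \<open>insert v (C \<union> W)\<close> lies strictly between \<open>B F = insert v C\<close> and \<open>F\<close>, so by the
  maximality of \<open>B F\<close> it is the trace of some member of the family.\<close>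
lemma core_fibre_traces:
  assumes "T' \<in> core_fibre C" and "W \<noteq> {}" and "W \<subset> T'"
  shows "\<exists>S'\<in>link_above C. S' \<inter> T' = W"
proof -
  obtain T where T: "T' = T - C" "T \<in> X_small" "core T = C"
    using assms(1) unfolding core_fibre_def by auto
  define F where "F = insert v T"
  define B2 where "B2 = insert v (C \<union> W)"
  have F: "F \<in> FF" "B F = insert v C" "v \<notin> T" "C \<subseteq> T"
    unfolding F_def using X_small_memberD[OF T(2)] T(3) by auto
  have W: "W \<subseteq> T - C"
    using assms(3) T(1) by auto
  obtain x where "x \<in> T - C" "x \<notin> W"
    using assms(3) T(1) by auto
  then have "B2 \<subset> F"
    unfolding B2_def F_def using W F by auto
  moreover have "B F \<subset> B2"
    unfolding B2_def using F W assms(2) by auto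
  ultimately have "card (B F) < card B2"
    using FF_member(3)[OF F(1)] by (meson finite_subset psubset_card_mono psubset_imp_subset)
  then obtain G where G: "G \<in> FF" "G \<inter> F = B2"
    using trace_if_card_B_less[OF F(1) \<open>B2 \<subset> F\<close>] by blast
  have "v \<notin> C"
    using F(3,4) by auto
  have "G - {v} \<in> link"
    unfolding link_def using G B2_def by auto
  moreover have "C \<subseteq> G - {v}"
    using G \<open>v \<notin> C\<close> unfolding B2_def by auto
  moreover have "(G - {v} - C) \<inter> T' = W"
  proof -
    have "(G - {v} - C) \<inter> T' = G \<inter> F - {v} - C"
      unfolding T(1) F_def by auto
    then show ?thesis
      using G(2) W F(3) unfolding B2_def by auto
  qed
  ultimately show ?thesis
    unfolding link_above_def by blast
qed

lemma trace_complete_core_fibre: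
  assumes "finite C" and "card C \<le> d - 2"
  shows "trace_complete_family (link_above C) (core_fibre C) (d - card C)"
proof (unfold_locales)
  have "link_above C = (\<lambda>S. S - C) ` {S \<in> link. C \<subseteq> S}"
    unfolding link_above_def by auto
  then show "finite (link_above C)"
    using finite_link by simp
  show "card S' = d - card C" if "S' \<in> link_above C" for S'
    using that link_memberD(2) assms(1) unfolding link_above_def by (auto simp: card_Diff_subset)
  show "1 \<le> d - card C"
    using assms(2) d_ge_2 by linarith
  show "core_fibre C \<subseteq> link_above C"
    unfolding core_fibre_def link_above_def using X_small_memberD(4,6) by blast
  show "S' \<inter> T' \<noteq> {}" if T': "T' \<in> core_fibre C" and S': "S' \<in> link_above C" for T' S'
  proof
    assume disjoint: "S' \<inter> T' = {}"
    obtain T where T: "T' = T - C" "T \<in> X_small" "core T = C"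
      using T' unfolding core_fibre_def by auto
    obtain S where S: "S' = S - C" "S \<in> link" "C \<subseteq> S"
      using S' unfolding link_above_def by auto
    have "insert v S \<inter> insert v T = B (insert v T)"
      using disjoint T S X_small_memberD(3,4)[OF T(2)] by auto
    then show False
      using trace_ne_B X_small_memberD(1)[OF T(2)] link_memberD(1)[OF S(2)] by blast
  qed
  show "\<exists>S'\<in>link_above C. S' \<inter> T' = W" if "T' \<in> core_fibre C" and "W \<noteq> {}" and "W \<subset> T'"
    for T' W
    using core_fibre_traces that .
qed

lemma card_core_fibre_le:
  assumes "finite C" and "card C \<le> d - 2"
  shows "card (core_fibre C) \<le> (d * d) ^ d"
proof -
  have "card (core_fibre C) \<le> ((d - card C) * (d - card C)) ^ (d - card C)"
    using trace_complete_family.card_TT_le[OF trace_complete_core_fibre[OF assms]] .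
  also have "\<dots> \<le> (d * d) ^ (d - card C)"
    by (intro power_mono mult_le_mono) auto
  also have "\<dots> \<le> (d * d) ^ d"
    using d_ge_2 by (intro power_increasing) auto
  finally show ?thesis .
qed

lemma finite_core_fibre: "finite (core_fibre C)"
proof -
  have "core_fibre C = (\<lambda>T. T - C) ` {T \<in> X_small. core T = C}"
    unfolding core_fibre_def by auto
  moreover have "finite X_small"
    using X_subset_link finite_link unfolding X_small_def by (auto intro: finite_subset)
  ultimately show ?thesis
    by simp
qed

lemma card_X_small_le_sum_core_fibre:
  "card X_small \<le> (\<Sum>C \<in> {C. C \<subseteq> {1..n} \<and> card C \<le> d - 2}. card (core_fibre C))"
proof -
  define Cs where "Cs = {C. C \<subseteq> {1..n} \<and> card C \<le> d - 2}"
  define split where "split T = (core T, T - core T)" for T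
  have "inj_on split X_small"
  proof (rule inj_onI)
    fix T1 T2
    assume "T1 \<in> X_small" "T2 \<in> X_small" "split T1 = split T2"
    then show "T1 = T2"
      using X_small_memberD(4) unfolding split_def by (metis Diff_partition prod.inject)
  qed
  moreover have "split ` X_small \<subseteq> Sigma Cs core_fibre"
  proof
    fix P
    assume "P \<in> split ` X_small"
    then obtain T where T: "T \<in> X_small" "P = split T"
      by auto
    then have "core T \<subseteq> {1..n}"
      using X_small_memberD(4,6) link_memberD(3) by blast
    then show "P \<in> Sigma Cs core_fibre"
      using T X_small_memberD(5) unfolding Cs_def split_def core_fibre_def by auto
  qed
  moreover have "finite Cs"
    unfolding Cs_def by simp
  ultimately have "card X_small \<le> card (Sigma Cs core_fibre)"
    using finite_core_fibre by (metis card_image card_mono finite_SigmaI)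
  also have "\<dots> = (\<Sum>C\<in>Cs. card (core_fibre C))"
    using \<open>finite Cs\<close> finite_core_fibre by (simp add: card_SigmaI)
  finally show ?thesis
    unfolding Cs_def .
qed

lemma card_X_small_le: "card X_small \<le> (d - 1) * (d * d) ^ d * n ^ (d - 2)"
proof -
  define Cs where "Cs = {C. C \<subseteq> {1..n} \<and> card C \<le> d - 2}"
  have "card X_small \<le> (\<Sum>C\<in>Cs. card (core_fibre C))"
    unfolding Cs_def by (rule card_X_small_le_sum_core_fibre)
  also have "\<dots> \<le> (\<Sum>C\<in>Cs. (d * d) ^ d)"
    unfolding Cs_def by (rule sum_mono) (auto intro: card_core_fibre_le finite_subset)
  also have "\<dots> = card Cs * (d * d) ^ d"
    by simp
  also have "\<dots> \<le> (d - 1) * n ^ (d - 2) * (d * d) ^ d"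
    using card_subsets_card_le[of "{1..n}" "d - 2"] v_in d_ge_2 unfolding Cs_def
    by (intro mult_right_mono) (auto simp: Suc_diff_Suc numeral_2_eq_2)
  finally show ?thesis
    by (simp add: ac_simps)
qed

lemma card_shadow_Y_le:
  "real (card (shadow Y (d - 1))) \<le> (real ((n - 1) choose (d - 1)) - real (card X)) + card X_small"
proof -
  have "finite X" and "X_full \<subseteq> X"
    using X_subset_link finite_link finite_subset unfolding X_full_def by auto
  then have "card X = card X_full + card X_small"
    unfolding X_small_def using card_Diff_subset[of X_full X] card_mono[of X X_full]
    by (simp add: finite_subset)
  then show ?thesis
    using card_X_full_add_card_shadow_le by linarith
qed

lemma card_X_small_powr_le:
  assumes "p \<ge> 0"
  shows "real (card X_small) powr p
    \<le> real ((d - 1) * (d * d) ^ d) powr p * real n powr (real (d - 2) * p)"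
proof -
  have "real n > 0"
    using v_in by simp
  then have "real (card X_small) \<le> real ((d - 1) * (d * d) ^ d) * real n powr real (d - 2)"
    using card_X_small_le by (simp add: powr_realpow flip: of_nat_mult of_nat_power)
  then have "real (card X_small) powr p
      \<le> (real ((d - 1) * (d * d) ^ d) * real n powr real (d - 2)) powr p"
    using assms by (intro powr_mono2) auto
  also have "\<dots> = real ((d - 1) * (d * d) ^ d) powr p * real n powr (real (d - 2) * p)"
    by (simp add: powr_mult powr_powr)
  finally show ?thesis .
qed

lemma card_Y_le:
  "real (card Y) \<le> deficit_coeff d * (real ((n - 1) choose (d - 1)) - real (card X))
      powr (real d / (real d - 1))
    + error_coeff d * real n powr (real d * (real d - 2) / (real d - 1))"
proof -
  define p where "p = real d / (real d - 1)"
  define K where "K = real ((d - 1) * (d * d) ^ d)"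
  define D where "D = real ((n - 1) choose (d - 1)) - real (card X)"
  define s where "s = real (card (shadow Y (d - 1)))"
  define c where "c = fact (d - 1) + (2 :: real)"
  have "0 \<le> p"
    unfolding p_def using d_ge_2 by simp
  have "real (Suc (d - 1)) / real (d - 1) = p"
    unfolding p_def using d_ge_2 by (simp add: of_nat_diff)
  moreover have "finite Y"
    using Y_subset_link finite_link by (rule finite_subset)
  moreover have "card S = Suc (d - 1)" if "S \<in> Y" for S
    using that Y_subset_link link_memberD(2) d_ge_2 by auto
  ultimately have card_Y: "real (card Y) \<le> c * s powr p"
    unfolding c_def s_def using card_le_card_shadow_powr[of "d - 1" Y] d_ge_2 by simp
  define e where "e = real d * (real d - 2) / (real d - 1)"
  have "real (card X_small) powr p \<le> K powr p * real n powr (real (d - 2) * p)"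
    unfolding K_def using \<open>0 \<le> p\<close> by (rule card_X_small_powr_le)
  also have "real (d - 2) * p = e"
    unfolding p_def e_def using d_ge_2 by (simp add: of_nat_diff)
  finally have "2 powr p * real (card X_small) powr p \<le> 2 powr p * (K powr p * real n powr e)"
    by (rule mult_left_mono) simp
  moreover have "s powr p \<le> 2 powr p * D powr p + 2 powr p * real (card X_small) powr p"
    using card_shadow_Y_le \<open>0 \<le> p\<close> unfolding s_def D_def by (intro powr_le_split) auto
  ultimately have "s powr p \<le> 2 powr p * D powr p + 2 powr p * (K powr p * real n powr e)"
    by linarith
  then have "c * s powr p \<le> c * (2 powr p * D powr p + 2 powr p * (K powr p * real n powr e))"
    by (rule mult_left_mono) (simp add: c_def add_nonneg_nonneg)
  then show ?thesis
    using card_Y unfolding deficit_coeff_def error_coeff_def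
    by (simp add: p_def e_def K_def D_def c_def algebra_simps)
qed

end

theorem claim3p4:
  fixes d :: nat
  assumes "d \<ge> 2"
  shows "\<exists>C1 C2 :: real. C1 > 0 \<and> C2 > 0 \<and>
    (\<forall>(n::nat) (\<F>::nat set set) (B::nat set \<Rightarrow> nat set) (v::nat).
       n \<ge> d + 2 \<and>
       \<F> \<subseteq> {F. F \<subseteq> {1..n} \<and> card F = d + 1} \<and>
       vc_dim_le \<F> d \<and>
       (\<forall>F\<in>\<F>. max_admissible \<F> F (B F)) \<and>
       v \<in> {1..n}
       \<longrightarrow> real (card (Yfam \<F> B v))
           \<le> C1 * (real ((n - 1) choose (d - 1)) - real (card (Xfam \<F> B v)))
                   powr (real d / (real d - 1))
              + C2 * real n powr (real d * (real d - 2) / (real d - 1)))"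
proof (intro exI conjI allI impI)
  show "deficit_coeff d > 0"
    by (rule deficit_coeff_pos)
  show "error_coeff d > 0"
    using assms by (rule error_coeff_pos)
  fix n \<F> B v
  assume "n \<ge> d + 2 \<and> \<F> \<subseteq> {F. F \<subseteq> {1..n} \<and> card F = d + 1} \<and> vc_dim_le \<F> d \<and>
    (\<forall>F\<in>\<F>. max_admissible \<F> F (B F)) \<and> v \<in> {1..n}"
  then interpret admissible_setting d n \<F> B v
    using assms by unfold_locales auto
  show "real (card (Yfam \<F> B v))
      \<le> deficit_coeff d * (real ((n - 1) choose (d - 1)) - real (card (Xfam \<F> B v)))
          powr (real d / (real d - 1))
        + error_coeff d * real n powr (real d * (real d - 2) / (real d - 1))"
    by (rule card_Y_le)
qed

end
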